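(* Let $k\ge1$, $n\ge2$, and let $\phi$ be a monotone $[k]$-edge-labeling of $K^{(2)}_n$. For each $0\le i\le k+1$, the symmetric difference of $X_i$ and $\hat X_i$ has size at most $2$; in particular $\big||X_i|-|\hat X_i|\big|\le2$.
   Context: $K^{(2)}_n$ is the complete graph on $[n]$ with its natural order. A $[k]$-edge-labeling $\phi$ assigns to each pair $uv$ ($u<v$) a label $\phi(uv)\in\{1,\dots,k\}$; it is monotone if $\phi(uv)\le\phi(vw)$ whenever $u<v<w$. Define $\Phi_L(1)=0$ and $\Phi_L(v)=\max\{\phi(uv):u<v\}$ for $v>1$; define $\Phi_R(n)=k+1$ and $\Phi_R(v)=\min\{\phi(vw):w>v\}$ for $v<n$. For $0\le i\le k+1$ let $X_i=\{v\in[n]:\Phi_L(v)=i\}$ and $\hat X_i=\{v\in[n]:\Phi_R(v)=i\}$. *)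

theory Defs
  imports Main
begin

definition edge_labeling :: "nat \<Rightarrow> nat \<Rightarrow> (nat \<Rightarrow> nat \<Rightarrow> nat) \<Rightarrow> bool" where
  "edge_labeling n k phi \<longleftrightarrow>
     (\<forall>u v. 1 \<le> u \<and> u < v \<and> v \<le> n \<longrightarrow> phi u v \<in> {1..k})"

definition monotone_labeling :: "nat \<Rightarrow> nat \<Rightarrow> (nat \<Rightarrow> nat \<Rightarrow> nat) \<Rightarrow> bool" where
  "monotone_labeling n k phi \<longleftrightarrow> edge_labeling n k phi \<and>
     (\<forall>u v w. 1 \<le> u \<and> u < v \<and> v < w \<and> w \<le> n \<longrightarrow> phi u v \<le> phi v w)"

definition PhiL :: "(nat \<Rightarrow> nat \<Rightarrow> nat) \<Rightarrow> nat \<Rightarrow> nat" where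
  "PhiL phi v = (if v = 1 then 0 else Max {phi u v | u. 1 \<le> u \<and> u < v})"

definition PhiR :: "nat \<Rightarrow> nat \<Rightarrow> (nat \<Rightarrow> nat \<Rightarrow> nat) \<Rightarrow> nat \<Rightarrow> nat" where
  "PhiR n k phi v = (if v = n then k + 1 else Min {phi v w | w. v < w \<and> w \<le> n})"

definition Xset :: "nat \<Rightarrow> (nat \<Rightarrow> nat \<Rightarrow> nat) \<Rightarrow> nat \<Rightarrow> nat set" where
  "Xset n phi i = {v \<in> {1..n}. PhiL phi v = i}"

definition Xhat :: "nat \<Rightarrow> nat \<Rightarrow> (nat \<Rightarrow> nat \<Rightarrow> nat) \<Rightarrow> nat \<Rightarrow> nat set" where
  "Xhat n k phi i = {v \<in> {1..n}. PhiR n k phi v = i}"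

end

theory Submission
  imports Defs
begin

text \<open>For a monotone labeling and vertices \<open>v < w\<close> we have
  \<open>\<Phi>\<^sub>L(v) \<le> \<Phi>\<^sub>R(v) \<le> \<phi>(vw) \<le> \<Phi>\<^sub>L(w)\<close>, so the sequence
  \<open>\<Phi>\<^sub>L(1), \<Phi>\<^sub>R(1), \<Phi>\<^sub>L(2), \<Phi>\<^sub>R(2), \<dots>\<close> is nondecreasing.
  Hence at most one vertex has \<open>\<Phi>\<^sub>L = i < \<Phi>\<^sub>R\<close> (all later ones have \<open>\<Phi>\<^sub>L > i\<close>),
  and at most one has \<open>\<Phi>\<^sub>L < i = \<Phi>\<^sub>R\<close> (all earlier ones have \<open>\<Phi>\<^sub>R < i\<close>);
  these are the only elements of the symmetric difference of \<open>X\<^sub>i\<close> and \<open>\<hat>X\<^sub>i\<close>.\<close>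

lemma abs_card_diff_le_card_sym_diff:
  assumes "finite A" and "finite B"
  shows "\<bar>int (card A) - int (card B)\<bar> \<le> int (card ((A - B) \<union> (B - A)))"
proof -
  have "card A = card (A \<inter> B) + card (A - B)" and "card B = card (A \<inter> B) + card (B - A)"
    using assms card_Int_Diff[of A B] card_Int_Diff[of B A] by (simp_all add: Int_commute)
  moreover have "card ((A - B) \<union> (B - A)) = card (A - B) + card (B - A)"
    using assms by (intro card_Un_disjoint) auto
  ultimately show ?thesis by linarith
qed

lemma card_le_1_if_no_ordered_pair:
  fixes S :: "'a::linorder set"
  assumes "finite S" and "\<And>v w. v \<in> S \<Longrightarrow> w \<in> S \<Longrightarrow> v < w \<Longrightarrow> False"
  shows "card S \<le> 1"
  using assms by (metis card_le_Suc0_iff_eq One_nat_def linorder_neqE)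

context
  fixes S :: "'a::linorder set" and a b :: "'a \<Rightarrow> 'b::order"
  assumes finite_S: "finite S"
    and a_le_b: "\<And>v. v \<in> S \<Longrightarrow> a v \<le> b v"
    and b_le_a: "\<And>v w. v \<in> S \<Longrightarrow> w \<in> S \<Longrightarrow> v < w \<Longrightarrow> b v \<le> a w"
begin

lemma card_level_set_diff_le_1:
  "card ({v \<in> S. a v = i} - {v \<in> S. b v = i}) \<le> 1" (is "card ?D \<le> 1")
proof (rule card_le_1_if_no_ordered_pair)
  fix v w assume "v \<in> ?D" "w \<in> ?D" "v < w"
  then show False using a_le_b[of v] b_le_a[of v w] by (auto intro: order.antisym)
qed (simp add: finite_S)

lemma card_level_set_diff_le_1':
  "card ({v \<in> S. b v = i} - {v \<in> S. a v = i}) \<le> 1" (is "card ?D \<le> 1")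
proof (rule card_le_1_if_no_ordered_pair)
  fix v w assume "v \<in> ?D" "w \<in> ?D" "v < w"
  then show False using a_le_b[of w] b_le_a[of v w] by (auto intro: order.antisym)
qed (simp add: finite_S)

end

lemma PhiL_eq_Max:
  assumes "v \<noteq> 1"
  shows "PhiL phi v = Max ((\<lambda>u. phi u v) ` {1..<v})"
proof -
  have "{phi u v | u. 1 \<le> u \<and> u < v} = (\<lambda>u. phi u v) ` {1..<v}" by auto
  with assms show ?thesis by (simp add: PhiL_def)
qed

lemma PhiR_eq_Min:
  assumes "v \<noteq> n"
  shows "PhiR n k phi v = Min ((\<lambda>w. phi v w) ` {v<..n})"
proof -
  have "{phi v w | w. v < w \<and> w \<le> n} = (\<lambda>w. phi v w) ` {v<..n}" by auto
  with assms show ?thesis by (simp add: PhiR_def)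
qed

lemma PhiR_le_PhiL:
  assumes "monotone_labeling n k phi" and "1 \<le> v" "v < w" "w \<le> n"
  shows "PhiR n k phi v \<le> PhiL phi w"
proof -
  have "PhiR n k phi v = Min ((\<lambda>w. phi v w) ` {v<..n})"
    using assms by (simp add: PhiR_eq_Min)
  also have "\<dots> \<le> phi v w" using assms by (intro Min_le) auto
  also have "\<dots> \<le> Max ((\<lambda>u. phi u w) ` {1..<w})" using assms by (intro Max_ge) auto
  also have "\<dots> = PhiL phi w" using assms by (simp add: PhiL_eq_Max)
  finally show ?thesis .
qed

lemma PhiL_le_PhiR:
  assumes m: "monotone_labeling n k phi" and "1 \<le> v" "v \<le> n"
  shows "PhiL phi v \<le> PhiR n k phi v"
proof (cases "v = 1")
  case True
  then show ?thesis by (simp add: PhiL_def)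
next
  case False
  then have L: "PhiL phi v = Max ((\<lambda>u. phi u v) ` {1..<v})" by (rule PhiL_eq_Max)
  have nonempty: "{1..<v} \<noteq> {}" using False assms by auto
  show ?thesis
  proof (cases "v = n")
    case True
    have "\<forall>u\<in>{1..<v}. phi u v \<le> k"
      using m True unfolding monotone_labeling_def edge_labeling_def by fastforce
    then have "PhiL phi v \<le> k" using nonempty by (simp add: L)
    then show ?thesis using True by (simp add: PhiR_def)
  next
    case False
    have "\<forall>u\<in>{1..<v}. \<forall>w\<in>{v<..n}. phi u v \<le> phi v w"
      using m unfolding monotone_labeling_def by auto
    then show ?thesis using False nonempty assms by (simp add: L PhiR_eq_Min)
  qed
qed

theorem lemma4p8:
  fixes n k :: nat and phi :: "nat \<Rightarrow> nat \<Rightarrow> nat"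
  assumes "k \<ge> 1" and "n \<ge> 2" and "monotone_labeling n k phi" and "i \<le> k + 1"
  shows "card ((Xset n phi i - Xhat n k phi i) \<union> (Xhat n k phi i - Xset n phi i)) \<le> 2
    \<and> \<bar>int (card (Xset n phi i)) - int (card (Xhat n k phi i))\<bar> \<le> 2"
proof -
  let ?X = "Xset n phi i" and ?Y = "Xhat n k phi i"
  have interleaved:
    "\<And>v. v \<in> {1..n} \<Longrightarrow> PhiL phi v \<le> PhiR n k phi v"
    "\<And>v w. v \<in> {1..n} \<Longrightarrow> w \<in> {1..n} \<Longrightarrow> v < w \<Longrightarrow> PhiR n k phi v \<le> PhiL phi w"
    using PhiL_le_PhiR PhiR_le_PhiL assms(3) by auto
  have "card (?X - ?Y) \<le> 1" and "card (?Y - ?X) \<le> 1"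
    unfolding Xset_def Xhat_def using interleaved
    by (intro card_level_set_diff_le_1 card_level_set_diff_le_1'; simp)+
  then have sym_diff: "card ((?X - ?Y) \<union> (?Y - ?X)) \<le> 2"
    using card_Un_le[of "?X - ?Y" "?Y - ?X"] by linarith
  have "finite ?X" and "finite ?Y" unfolding Xset_def Xhat_def by simp_all
  then have "\<bar>int (card ?X) - int (card ?Y)\<bar> \<le> 2"
    using abs_card_diff_le_card_sym_diff[of ?X ?Y] sym_diff by linarith
  with sym_diff show ?thesis by simp
qed

end
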